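(* Let $q>0$, $\kappa>0$, $\sigma>0$, $\mu\in\mathbb{R}$, $\theta\in\mathbb{R}$, and let $\psi_X$, $\rho$, $\hat\rho$, $\zeta$, $\hat\zeta$, $d$ be as in the context. Consider the equation $$\psi_X(z)=q,\qquad z\in\mathbb{C}. \tag{$*$}$$ Then: (i) $( * )$ has no solutions, exactly one solution, or exactly two solutions. (ii) $z_0\in\mathbb{C}$ is a solution of $( * )$ if and only if $z_0\in[\hat\rho,0)\cup(0,\rho]$, $z_0\in\{\zeta,\hat\zeta\}$, $d>0$, and $q-1/\kappa\le \mu z_0$. In particular, whenever one of $\zeta,\hat\zeta$ is a solution of $( * )$, we have $\zeta\neq\hat\zeta$. (iii) If $\zeta$ is a solution of $( * )$ then $\zeta>0$; if $\hat\zeta$ is a solution of $( * )$ then $\hat\zeta<0$. Consequently, if both are solutions, then $\hat\rho\le\hat\zeta<0<\zeta\le\rho$. (iv) If $z_0$ solves $( * )$ and $\hat\rho<z_0<\rho$, then $z_0$ is a simple zero of the function $q-\psi_X(z)$ (which is analytic near $z_0$). (v) If $\zeta\in\mathbb{R}$ then $\hat\rho\le\zeta\le\rho$; if $\hat\zeta\in\mathbb{R}$ then $\hat\rho\le\hat\zeta\le\rho$. (vi) Neither $\rho=\hat\zeta$ nor $\hat\rho=\zeta$ is possible. (vii) One has both $\rho=\zeta$ and $\hat\rho=\hat\zeta$ if and only if $\mu=0$ and $q=1/\kappa$.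
   Context: Parameters: $q>0,\kappa>0,\sigma>0,\mu\in\mathbb{R},\theta\in\mathbb{R}$. The Laplace exponent of the Normal Inverse Gaussian (NIG) process with parameters $(\theta,\sigma,\kappa,\mu)$ is $$\psi_X(z)=\frac1\kappa-\frac1\kappa\sqrt{1-2\kappa\theta z-\kappa\sigma^2z^2}+\mu z,$$ where $\sqrt{\cdot}$ denotes the principal square root (values with nonnegative real part; for a negative real number $-y$ it equals $\iota\sqrt{y}$), $\iota=\sqrt{-1}$. Put $$\rho:=\frac{-\theta+\sqrt{\theta^2+\sigma^2/\kappa}}{\sigma^2},\qquad \hat\rho:=\frac{-\theta-\sqrt{\theta^2+\sigma^2/\kappa}}{\sigma^2},$$ so that $p(z):=1-2\kappa\theta z-\kappa\sigma^2z^2=(1-z/\rho)(1-z/\hat\rho)$ and $\hat\rho<0<\rho$. Further put $$d:=\theta^2+\mu^2-2\theta\mu(q\kappa-1)+q\sigma^2(2-q\kappa),$$ $$\zeta:=\frac{-\theta-\mu+\kappa\mu q+\sqrt d}{\kappa\mu^2+\sigma^2},\qquad \hat\zeta:=\frac{-\theta-\mu+\kappa\mu q-\sqrt d}{\kappa\mu^2+\sigma^2},$$ which are the two roots of the quadratic equation $p(z)=(1-q\kappa+\kappa\mu z)^2$ (possibly complex). *)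

theory Defs
  imports "HOL-Analysis.Analysis"
begin

text \<open>Laplace exponent of the NIG process, with the principal complex square root csqrt
  (Re >= 0; csqrt of a negative real -y is i * sqrt y).\<close>
definition psiX :: "real \<Rightarrow> real \<Rightarrow> real \<Rightarrow> real \<Rightarrow> complex \<Rightarrow> complex" where
  "psiX \<theta> \<sigma> \<kappa> \<mu> z =
     1 / of_real \<kappa>
     - 1 / of_real \<kappa> * csqrt (1 - 2 * of_real \<kappa> * of_real \<theta> * z - of_real \<kappa> * (of_real \<sigma>)\<^sup>2 * z\<^sup>2)
     + of_real \<mu> * z"

definition rhoNIG :: "real \<Rightarrow> real \<Rightarrow> real \<Rightarrow> real" where
  "rhoNIG \<theta> \<sigma> \<kappa> = (- \<theta> + sqrt (\<theta>\<^sup>2 + \<sigma>\<^sup>2 / \<kappa>)) / \<sigma>\<^sup>2"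

definition rhohatNIG :: "real \<Rightarrow> real \<Rightarrow> real \<Rightarrow> real" where
  "rhohatNIG \<theta> \<sigma> \<kappa> = (- \<theta> - sqrt (\<theta>\<^sup>2 + \<sigma>\<^sup>2 / \<kappa>)) / \<sigma>\<^sup>2"

definition dNIG :: "real \<Rightarrow> real \<Rightarrow> real \<Rightarrow> real \<Rightarrow> real \<Rightarrow> real" where
  "dNIG q \<theta> \<sigma> \<kappa> \<mu> = \<theta>\<^sup>2 + \<mu>\<^sup>2 - 2 * \<theta> * \<mu> * (q * \<kappa> - 1) + q * \<sigma>\<^sup>2 * (2 - q * \<kappa>)"

definition zetaNIG :: "real \<Rightarrow> real \<Rightarrow> real \<Rightarrow> real \<Rightarrow> real \<Rightarrow> complex" where
  "zetaNIG q \<theta> \<sigma> \<kappa> \<mu> =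
     (of_real (- \<theta> - \<mu> + \<kappa> * \<mu> * q) + csqrt (of_real (dNIG q \<theta> \<sigma> \<kappa> \<mu>)))
     / of_real (\<kappa> * \<mu>\<^sup>2 + \<sigma>\<^sup>2)"

definition zetahatNIG :: "real \<Rightarrow> real \<Rightarrow> real \<Rightarrow> real \<Rightarrow> real \<Rightarrow> complex" where
  "zetahatNIG q \<theta> \<sigma> \<kappa> \<mu> =
     (of_real (- \<theta> - \<mu> + \<kappa> * \<mu> * q) - csqrt (of_real (dNIG q \<theta> \<sigma> \<kappa> \<mu>)))
     / of_real (\<kappa> * \<mu>\<^sup>2 + \<sigma>\<^sup>2)"

end

theory Submission
  imports Defs
begin

text \<open>
  Since \<open>\<kappa> > 0\<close>, \<open>\<psi>(z) = q\<close> says \<open>csqrt (p z) = w z\<close> for the affine function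
  \<open>w z = 1 - q\<kappa> + \<kappa>\<mu> z\<close>, i.e. \<open>(w z)\<^sup>2 = p z\<close> with \<open>w z\<close> on the principal branch.
  With \<open>D = \<sigma>\<^sup>2 + \<kappa>\<mu>\<^sup>2\<close> (\<open>zeta_den\<close>) and \<open>b = \<kappa>\<mu>q - \<theta> - \<mu>\<close> (\<open>zeta_mid\<close>) one has
  \<open>D ((w z)\<^sup>2 - p z) = \<kappa> ((D z - b)\<^sup>2 - d)\<close>, so the roots of the squared equation are
  exactly \<open>\<zeta>\<close> and \<open>\<zeta>h\<close>. At a non-real root, the real and imaginary parts of
  \<open>(w z)\<^sup>2 = p z\<close> force \<open>Re (w z) < 0\<close>, so all solutions are real. At a real root \<open>x\<close>,
  \<open>\<kappa> x (D x - b) = (w x - 1)\<^sup>2/2 + q\<kappa> w x + \<kappa>\<sigma>\<^sup>2 x\<^sup>2/2\<close>, which is positive when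
  \<open>w x \<ge> 0\<close> and \<open>x \<noteq> 0\<close>; as \<open>D x - b = \<plusminus>\<surd>d\<close>, this makes \<open>\<zeta>\<close> positive, \<open>\<zeta>h\<close> negative
  and \<open>d > 0\<close>. The factorisation \<open>p x = -\<kappa>\<sigma>\<^sup>2 (x - \<rho>)(x - \<rho>h)\<close> confines real roots
  to \<open>[\<rho>h, \<rho>]\<close>, and inside this interval the derivative of \<open>\<psi>\<close> at a solution is
  \<open>(D x - b) / w x \<noteq> 0\<close>.
\<close>

lemma csqrt_eq_iff: "csqrt S = T \<longleftrightarrow> T\<^sup>2 = S \<and> (0 < Re T \<or> Re T = 0 \<and> 0 \<le> Im T)"
  using csqrt_unique csqrt_principal power2_csqrt by metis

locale nig_params =
  fixes q \<kappa> \<sigma> \<mu> \<theta> :: real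
  assumes q_pos: "q > 0" and kappa_pos: "\<kappa> > 0" and sigma_pos: "\<sigma> > 0"
begin

abbreviation "psi \<equiv> psiX \<theta> \<sigma> \<kappa> \<mu>"
abbreviation "rho \<equiv> rhoNIG \<theta> \<sigma> \<kappa>"
abbreviation "rhohat \<equiv> rhohatNIG \<theta> \<sigma> \<kappa>"
abbreviation "disc \<equiv> dNIG q \<theta> \<sigma> \<kappa> \<mu>"
abbreviation "zeta \<equiv> zetaNIG q \<theta> \<sigma> \<kappa> \<mu>"
abbreviation "zetahat \<equiv> zetahatNIG q \<theta> \<sigma> \<kappa> \<mu>"

definition p :: "'a::real_field \<Rightarrow> 'a" where
  "p z = 1 - 2 * of_real \<kappa> * of_real \<theta> * z - of_real \<kappa> * (of_real \<sigma>)\<^sup>2 * z\<^sup>2"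

definition w :: "'a::real_field \<Rightarrow> 'a" where
  "w z = of_real (1 - q * \<kappa>) + of_real (\<kappa> * \<mu>) * z"

definition zeta_den :: real where "zeta_den = \<sigma>\<^sup>2 + \<kappa> * \<mu>\<^sup>2"

definition zeta_mid :: real where "zeta_mid = - \<theta> - \<mu> + \<kappa> * \<mu> * q"

lemma p_of_real: "p (of_real x) = of_real (p x)"
  by (simp add: p_def)

lemma w_of_real: "w (of_real x) = of_real (w x)"
  by (simp add: w_def)

lemma psi_eq_iff_csqrt: "psi z = of_real q \<longleftrightarrow> csqrt (p z) = w z"
  using kappa_pos unfolding psiX_def p_def w_def by (auto simp: field_simps)

lemma psi_eq_iff_square:
  "psi z = of_real q \<longleftrightarrow> (w z)\<^sup>2 = p z \<and> (0 < Re (w z) \<or> Re (w z) = 0 \<and> 0 \<le> Im (w z))"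
  unfolding psi_eq_iff_csqrt csqrt_eq_iff ..

lemma psi_of_real_eq_iff: "psi (of_real x) = of_real q \<longleftrightarrow> (w x)\<^sup>2 = p x \<and> 0 \<le> w x"
  unfolding psi_eq_iff_square w_of_real p_of_real of_real_power[symmetric] of_real_eq_iff
  by auto

lemma p_real: "p x = 1 - 2 * \<kappa> * \<theta> * x - \<kappa> * \<sigma>\<^sup>2 * x\<^sup>2"
  by (simp add: p_def)

lemma w_real: "w x = 1 - q * \<kappa> + \<kappa> * \<mu> * x"
  by (simp add: w_def)

lemma w_nonneg_iff: "0 \<le> w x \<longleftrightarrow> q - 1 / \<kappa> \<le> \<mu> * x"
  using kappa_pos unfolding w_real by (simp add: field_simps)

lemma abs_theta_less_sqrt: "\<bar>\<theta>\<bar> < sqrt (\<theta>\<^sup>2 + \<sigma>\<^sup>2 / \<kappa>)"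
  using kappa_pos sigma_pos by (simp add: real_less_rsqrt)

lemma rhohat_neg: "rhohat < 0"
  using abs_theta_less_sqrt sigma_pos unfolding rhohatNIG_def by (simp add: divide_neg_pos)

lemma rho_pos: "0 < rho"
  using abs_theta_less_sqrt sigma_pos unfolding rhoNIG_def by simp

lemma p_factor: "p x = - (\<kappa> * \<sigma>\<^sup>2) * ((x - rho) * (x - rhohat))"
proof -
  define r where "r = sqrt (\<theta>\<^sup>2 + \<sigma>\<^sup>2 / \<kappa>)"
  have r2: "r\<^sup>2 = \<theta>\<^sup>2 + \<sigma>\<^sup>2 / \<kappa>"
    unfolding r_def using kappa_pos by simp
  have "- (\<kappa> * \<sigma>\<^sup>2) * ((x - (- \<theta> + r) / \<sigma>\<^sup>2) * (x - (- \<theta> - r) / \<sigma>\<^sup>2))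
        = - \<kappa> * \<sigma>\<^sup>2 * x\<^sup>2 - 2 * \<kappa> * \<theta> * x + \<kappa> * (r\<^sup>2 - \<theta>\<^sup>2) / \<sigma>\<^sup>2"
    using sigma_pos by (simp add: field_simps power2_eq_square)
  also have "\<kappa> * (r\<^sup>2 - \<theta>\<^sup>2) / \<sigma>\<^sup>2 = 1"
    using r2 kappa_pos sigma_pos by (simp add: field_simps)
  finally show ?thesis
    unfolding p_real rhoNIG_def rhohatNIG_def r_def[symmetric] by simp
qed

lemma p_rho: "p rho = 0" and p_rhohat: "p rhohat = 0"
  by (simp_all add: p_factor)

lemma p_nonneg_iff: "0 \<le> p x \<longleftrightarrow> rhohat \<le> x \<and> x \<le> rho"
proof -
  have "0 \<le> p x \<longleftrightarrow> (x - rho) * (x - rhohat) \<le> 0"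
    unfolding p_factor using kappa_pos sigma_pos by (simp add: mult_le_0_iff)
  then show ?thesis
    using rho_pos rhohat_neg by (auto simp: mult_le_0_iff)
qed

lemma p_pos_iff: "0 < p x \<longleftrightarrow> rhohat < x \<and> x < rho"
proof -
  have "0 < p x \<longleftrightarrow> (x - rho) * (x - rhohat) < 0"
    unfolding p_factor using kappa_pos sigma_pos by (simp add: mult_less_0_iff)
  then show ?thesis
    using rho_pos rhohat_neg by (auto simp: mult_less_0_iff)
qed

lemma zeta_den_pos: "0 < zeta_den"
  unfolding zeta_den_def using sigma_pos kappa_pos by (simp add: add_pos_nonneg)

lemma zeta_den_nonzero [simp]: "zeta_den \<noteq> 0"
  using zeta_den_pos by simp

lemma discriminant_identity:
  fixes z :: "'a::real_field"
  shows "of_real zeta_den * ((w z)\<^sup>2 - p z)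
    = of_real \<kappa> * ((of_real zeta_den * z - of_real zeta_mid)\<^sup>2 - of_real disc)"
  unfolding zeta_den_def zeta_mid_def dNIG_def w_def p_def
  by (simp add: algebra_simps power2_eq_square)

lemma zeta_den_of_real: "complex_of_real (\<kappa> * \<mu>\<^sup>2 + \<sigma>\<^sup>2) = of_real zeta_den"
  by (simp add: zeta_den_def add.commute)

lemma zeta_den_mult_zeta: "of_real zeta_den * zeta - of_real zeta_mid = csqrt (of_real disc)"
  unfolding zetaNIG_def zeta_den_of_real zeta_mid_def by (simp add: field_simps)

lemma zeta_den_mult_zetahat: "of_real zeta_den * zetahat - of_real zeta_mid = - csqrt (of_real disc)"
  unfolding zetahatNIG_def zeta_den_of_real zeta_mid_def by (simp add: field_simps)

lemma square_eq_iff_zeta: "(w z)\<^sup>2 = p z \<longleftrightarrow> z = zeta \<or> z = zetahat"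
proof -
  have "(w z)\<^sup>2 - p z = 0 \<longleftrightarrow> (of_real zeta_den * z - of_real zeta_mid)\<^sup>2 - of_real disc = 0"
    using discriminant_identity[of z] kappa_pos
    by (metis mult_eq_0_iff of_real_eq_0_iff zeta_den_nonzero less_irrefl)
  then have "(w z)\<^sup>2 = p z \<longleftrightarrow> (of_real zeta_den * z - of_real zeta_mid)\<^sup>2 = (csqrt (of_real disc))\<^sup>2"
    by (simp only: power2_csqrt right_minus_eq)
  also have "\<dots> \<longleftrightarrow> z = zeta \<or> z = zetahat"
  proof -
    have "of_real zeta_den * z - of_real zeta_mid = csqrt (of_real disc) \<longleftrightarrow> z = zeta"
      and "of_real zeta_den * z - of_real zeta_mid = - csqrt (of_real disc) \<longleftrightarrow> z = zetahat"
      by (simp only: zeta_den_mult_zeta[symmetric], simp)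
        (simp only: zeta_den_mult_zetahat[symmetric], simp)
    then show ?thesis
      unfolding power2_eq_iff by blast
  qed
  finally show ?thesis .
qed

lemma Re_w_neg_if_nonreal_root:
  assumes sq: "(w z)\<^sup>2 = p z" and nonreal: "Im z \<noteq> 0"
  shows "Re (w z) < 0"
proof -
  obtain x y where z: "z = Complex x y"
    by (cases z)
  have y: "y \<noteq> 0"
    using nonreal z by simp
  have w_z: "w z = Complex (w x) (\<kappa> * \<mu> * y)"
    unfolding z w_def by (simp add: complex_eq_iff)
  have re: "(w x)\<^sup>2 - (\<kappa> * \<mu> * y)\<^sup>2 = p x + \<kappa> * \<sigma>\<^sup>2 * y\<^sup>2"
    using arg_cong[OF sq, of Re] unfolding w_z unfolding z p_def
    by (simp add: power2_eq_square algebra_simps)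
  have "y * (2 * \<kappa> * (w x * \<mu> + \<theta> + \<sigma>\<^sup>2 * x)) = 0"
    using arg_cong[OF sq, of Im] unfolding w_z unfolding z p_def
    by (simp add: power2_eq_square algebra_simps)
  then have theta: "\<theta> = - w x * \<mu> - \<sigma>\<^sup>2 * x"
    using y kappa_pos by simp
  have "p x = 2 * (w x)\<^sup>2 - 2 * (1 - q * \<kappa>) * w x + 1 + \<kappa> * \<sigma>\<^sup>2 * x\<^sup>2"
    unfolding p_real by (subst theta) (simp add: w_real power2_eq_square algebra_simps)
  moreover have "0 < (\<kappa> * \<mu> * y)\<^sup>2 + \<kappa> * \<sigma>\<^sup>2 * y\<^sup>2"
    using y kappa_pos sigma_pos by (simp add: add_nonneg_pos)
  ultimately have "(w x - 1)\<^sup>2 + 2 * q * \<kappa> * w x + \<kappa> * \<sigma>\<^sup>2 * x\<^sup>2 < 0"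
    using re by (simp add: power2_eq_square algebra_simps)
  moreover have "0 \<le> \<kappa> * \<sigma>\<^sup>2 * x\<^sup>2" and "0 \<le> (w x - 1)\<^sup>2"
    using kappa_pos by simp_all
  ultimately have "q * \<kappa> * w x < 0"
    by linarith
  then show ?thesis
    using q_pos kappa_pos w_z by (simp add: mult_less_0_iff)
qed

lemma psi_solution_real:
  assumes "psi z = of_real q"
  shows "z = of_real (Re z)"
proof -
  have "(w z)\<^sup>2 = p z" and "0 \<le> Re (w z)"
    using assms unfolding psi_eq_iff_square by auto
  then have "Im z = 0"
    using Re_w_neg_if_nonreal_root by force
  then show ?thesis
    by (simp add: complex_eq_iff)
qed

lemma energy_identity:
  assumes "(w x)\<^sup>2 = p x"
  shows "\<kappa> * x * (zeta_den * x - zeta_mid)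
    = (w x - 1)\<^sup>2 / 2 + q * \<kappa> * w x + \<kappa> * \<sigma>\<^sup>2 * x\<^sup>2 / 2"
proof -
  have theta: "\<kappa> * \<theta> * x = (1 - (w x)\<^sup>2 - \<kappa> * \<sigma>\<^sup>2 * x\<^sup>2) / 2"
    using assms unfolding p_real by simp
  have mu: "\<kappa> * \<mu> * x = w x - (1 - q * \<kappa>)"
    unfolding w_real by simp
  have "\<kappa> * x * (zeta_den * x - zeta_mid) = \<kappa> * \<sigma>\<^sup>2 * x\<^sup>2 + \<kappa> * \<theta> * x + \<kappa> * \<mu> * x * w x"
    unfolding zeta_den_def zeta_mid_def w_real by (simp add: algebra_simps power2_eq_square)
  also have "\<dots> = \<kappa> * \<sigma>\<^sup>2 * x\<^sup>2 + (1 - (w x)\<^sup>2 - \<kappa> * \<sigma>\<^sup>2 * x\<^sup>2) / 2 + (w x - (1 - q * \<kappa>)) * w x"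
    unfolding theta mu ..
  also have "\<dots> = (w x - 1)\<^sup>2 / 2 + q * \<kappa> * w x + \<kappa> * \<sigma>\<^sup>2 * x\<^sup>2 / 2"
    by (simp add: field_simps power2_eq_square)
  finally show ?thesis .
qed

lemma square_eq_imp_disc:
  assumes "(w x)\<^sup>2 = p x"
  shows "(zeta_den * x - zeta_mid)\<^sup>2 = disc"
  using discriminant_identity[of x] assms kappa_pos by simp

lemma zeta_dist_eq_w: "zeta_den * x - zeta_mid = \<theta> + \<sigma>\<^sup>2 * x + \<mu> * w x"
  unfolding zeta_den_def zeta_mid_def w_real by (simp add: algebra_simps power2_eq_square)

lemma zeta_eq_of_real:
  assumes "zeta = of_real x"
  shows "(w x)\<^sup>2 = p x" and "0 \<le> zeta_den * x - zeta_mid"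
proof -
  show sq: "(w x)\<^sup>2 = p x"
    using square_eq_iff_zeta[of "of_real x"] assms
    unfolding w_of_real p_of_real of_real_power[symmetric] of_real_eq_iff by simp
  have "0 \<le> disc"
    using square_eq_imp_disc[OF sq] by (metis zero_le_power2)
  then have "complex_of_real (zeta_den * x - zeta_mid) = of_real (sqrt disc)"
    using zeta_den_mult_zeta assms by simp
  then show "0 \<le> zeta_den * x - zeta_mid"
    by (simp only: of_real_eq_iff real_sqrt_ge_zero \<open>0 \<le> disc\<close>)
qed

lemma zetahat_eq_of_real:
  assumes "zetahat = of_real x"
  shows "(w x)\<^sup>2 = p x" and "zeta_den * x - zeta_mid \<le> 0"
proof -
  show sq: "(w x)\<^sup>2 = p x"
    using square_eq_iff_zeta[of "of_real x"] assms
    unfolding w_of_real p_of_real of_real_power[symmetric] of_real_eq_iff by simp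
  have "0 \<le> disc"
    using square_eq_imp_disc[OF sq] by (metis zero_le_power2)
  then have "complex_of_real (zeta_den * x - zeta_mid) = of_real (- sqrt disc)"
    using zeta_den_mult_zetahat assms by simp
  then show "zeta_den * x - zeta_mid \<le> 0"
    by (simp only: of_real_eq_iff neg_le_0_iff_le real_sqrt_ge_zero \<open>0 \<le> disc\<close>)
qed

lemma mult_zeta_dist_pos:
  assumes "(w x)\<^sup>2 = p x" and "0 \<le> w x" and "x \<noteq> 0"
  shows "0 < x * (zeta_den * x - zeta_mid)"
proof -
  have "0 < \<kappa> * \<sigma>\<^sup>2 * x\<^sup>2"
    using kappa_pos sigma_pos assms(3) by simp
  moreover have "0 \<le> q * \<kappa> * w x"
    using q_pos kappa_pos assms(2) by simp
  moreover have "0 \<le> (w x - 1)\<^sup>2"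
    by simp
  ultimately have "0 < \<kappa> * x * (zeta_den * x - zeta_mid)"
    unfolding energy_identity[OF assms(1)] by linarith
  then show ?thesis
    using kappa_pos zero_less_mult_pos by (metis mult.assoc)
qed

lemma zeta_of_real_pos:
  assumes "zeta = of_real x" and "0 \<le> w x" and "x \<noteq> 0"
  shows "0 < x"
  using mult_zeta_dist_pos[OF zeta_eq_of_real(1)[OF assms(1)] assms(2,3)] zeta_eq_of_real(2)[OF assms(1)]
  by (auto simp: zero_less_mult_iff)

lemma zetahat_of_real_neg:
  assumes "zetahat = of_real x" and "0 \<le> w x" and "x \<noteq> 0"
  shows "x < 0"
  using mult_zeta_dist_pos[OF zetahat_eq_of_real(1)[OF assms(1)] assms(2,3)] zetahat_eq_of_real(2)[OF assms(1)]
  by (auto simp: zero_less_mult_iff)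

lemma real_solution_nonzero:
  assumes "psi (of_real x) = of_real q"
  shows "x \<noteq> 0"
proof
  assume "x = 0"
  then have "(1 - q * \<kappa>)\<^sup>2 = 1" and "0 \<le> 1 - q * \<kappa>"
    using assms unfolding psi_of_real_eq_iff w_real p_real by auto
  then show False
    using q_pos kappa_pos by (simp add: power2_eq_1_iff)
qed

lemma real_solution_disc_pos:
  assumes "psi (of_real x) = of_real q"
  shows "0 < disc"
proof -
  have sq: "(w x)\<^sup>2 = p x" and "0 \<le> w x"
    using assms unfolding psi_of_real_eq_iff by auto
  then have "zeta_den * x - zeta_mid \<noteq> 0"
    using mult_zeta_dist_pos real_solution_nonzero[OF assms] by fastforce
  then have "0 < (zeta_den * x - zeta_mid)\<^sup>2"
    by simp
  then show ?thesis
    unfolding square_eq_imp_disc[OF sq] .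
qed

lemma solutions_subset_zetas: "{z. psi z = of_real q} \<subseteq> {zeta, zetahat}"
  using square_eq_iff_zeta unfolding psi_eq_iff_square by blast

lemma finite_solutions: "finite {z. psi z = of_real q}"
  using solutions_subset_zetas by (rule finite_subset) simp

lemma card_solutions_le_2: "card {z. psi z = of_real q} \<le> 2"
proof -
  have "card {z. psi z = of_real q} \<le> card {zeta, zetahat}"
    using solutions_subset_zetas by (rule card_mono[rotated]) simp
  also have "\<dots> \<le> 2"
    by (simp add: card_insert_if)
  finally show ?thesis .
qed

lemma psi_eq_iff:
  "psi z = of_real q \<longleftrightarrow>
    (\<exists>x. z = of_real x \<and> x \<in> {rhohat..<0} \<union> {0<..rho}
      \<and> (z = zeta \<or> z = zetahat) \<and> 0 < disc \<and> q - 1 / \<kappa> \<le> \<mu> * x)"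
proof
  assume sol: "psi z = of_real q"
  define x where "x = Re z"
  have z: "z = of_real x"
    unfolding x_def using psi_solution_real[OF sol] .
  have sol_x: "psi (of_real x) = of_real q"
    using sol unfolding z .
  then have "(w x)\<^sup>2 = p x" and "0 \<le> w x"
    unfolding psi_of_real_eq_iff by auto
  then have "rhohat \<le> x \<and> x \<le> rho" and "q - 1 / \<kappa> \<le> \<mu> * x"
    unfolding p_nonneg_iff[symmetric] w_nonneg_iff[symmetric] by (metis zero_le_power2)+
  then have "x \<in> {rhohat..<0} \<union> {0<..rho}" and "q - 1 / \<kappa> \<le> \<mu> * x"
    using real_solution_nonzero[OF sol_x] by auto
  moreover have "z = zeta \<or> z = zetahat"
    using sol solutions_subset_zetas by blast
  ultimately show "\<exists>x. z = of_real x \<and> x \<in> {rhohat..<0} \<union> {0<..rho}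
      \<and> (z = zeta \<or> z = zetahat) \<and> 0 < disc \<and> q - 1 / \<kappa> \<le> \<mu> * x"
    using z real_solution_disc_pos[OF sol_x] by blast
next
  assume "\<exists>x. z = of_real x \<and> x \<in> {rhohat..<0} \<union> {0<..rho}
      \<and> (z = zeta \<or> z = zetahat) \<and> 0 < disc \<and> q - 1 / \<kappa> \<le> \<mu> * x"
  then obtain x where z: "z = of_real x" and "z = zeta \<or> z = zetahat" and "0 \<le> w x"
    unfolding w_nonneg_iff by blast
  then have "(w x)\<^sup>2 = p x"
    using zeta_eq_of_real(1) zetahat_eq_of_real(1) by metis
  then show "psi z = of_real q"
    using \<open>0 \<le> w x\<close> unfolding z psi_of_real_eq_iff by simp
qed

lemma solution_disc_pos: "psi z = of_real q \<Longrightarrow> 0 < disc"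
  using psi_eq_iff by blast

lemma zeta_neq_zetahat:
  assumes "psi zeta = of_real q \<or> psi zetahat = of_real q"
  shows "zeta \<noteq> zetahat"
proof
  assume "zeta = zetahat"
  then have "csqrt (of_real disc) = - csqrt (of_real disc)"
    using zeta_den_mult_zeta zeta_den_mult_zetahat by simp
  then have "disc = 0"
    by simp
  then show False
    using assms solution_disc_pos by auto
qed

lemma zeta_solution_pos:
  assumes "psi zeta = of_real q"
  shows "zeta \<in> \<real> \<and> 0 < Re zeta"
proof -
  define x where "x = Re zeta"
  have z: "zeta = of_real x"
    unfolding x_def using psi_solution_real[OF assms] .
  have "0 \<le> w x" and "x \<noteq> 0"
    using assms real_solution_nonzero unfolding z psi_of_real_eq_iff by auto
  then have "0 < x"
    using zeta_of_real_pos[OF z] by blast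
  then show ?thesis
    unfolding z by simp
qed

lemma zetahat_solution_neg:
  assumes "psi zetahat = of_real q"
  shows "zetahat \<in> \<real> \<and> Re zetahat < 0"
proof -
  define x where "x = Re zetahat"
  have z: "zetahat = of_real x"
    unfolding x_def using psi_solution_real[OF assms] .
  have "0 \<le> w x" and "x \<noteq> 0"
    using assms real_solution_nonzero unfolding z psi_of_real_eq_iff by auto
  then have "x < 0"
    using zetahat_of_real_neg[OF z] by blast
  then show ?thesis
    unfolding z by simp
qed

lemma zeta_real_bounds:
  assumes "zeta \<in> \<real>"
  shows "rhohat \<le> Re zeta \<and> Re zeta \<le> rho"
proof -
  have "zeta = of_real (Re zeta)"
    using assms by (simp add: complex_is_Real_iff complex_eq_iff)
  then show ?thesis
    using zeta_eq_of_real(1) p_nonneg_iff by (metis zero_le_power2)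
qed

lemma zetahat_real_bounds:
  assumes "zetahat \<in> \<real>"
  shows "rhohat \<le> Re zetahat \<and> Re zetahat \<le> rho"
proof -
  have "zetahat = of_real (Re zetahat)"
    using assms by (simp add: complex_is_Real_iff complex_eq_iff)
  then show ?thesis
    using zetahat_eq_of_real(1) p_nonneg_iff by (metis zero_le_power2)
qed

lemma rho_neq_zetahat: "of_real rho \<noteq> zetahat"
proof
  assume "of_real rho = zetahat"
  then have "(w rho)\<^sup>2 = 0"
    using zetahat_eq_of_real(1) p_rho by simp
  then show False
    using zetahat_of_real_neg[OF \<open>of_real rho = zetahat\<close>[symmetric]] rho_pos by simp
qed

lemma rhohat_neq_zeta: "of_real rhohat \<noteq> zeta"
proof
  assume "of_real rhohat = zeta"
  then have "(w rhohat)\<^sup>2 = 0"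
    using zeta_eq_of_real(1) p_rhohat by simp
  then show False
    using zeta_of_real_pos[OF \<open>of_real rhohat = zeta\<close>[symmetric]] rhohat_neg by simp
qed

lemma zetas_eq_rhos_iff:
  "(zeta = of_real rho \<and> zetahat = of_real rhohat) \<longleftrightarrow> (\<mu> = 0 \<and> q = 1 / \<kappa>)"
proof
  assume "zeta = of_real rho \<and> zetahat = of_real rhohat"
  then have "w rho = 0" and "w rhohat = 0"
    using zeta_eq_of_real(1) zetahat_eq_of_real(1) p_rho p_rhohat by simp_all
  moreover have "w rho - w rhohat = \<kappa> * \<mu> * (rho - rhohat)"
    unfolding w_real by (simp add: algebra_simps)
  ultimately have "\<kappa> * \<mu> * (rho - rhohat) = 0" and "1 - q * \<kappa> + \<kappa> * \<mu> * rho = 0"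
    unfolding w_real by simp_all
  moreover have "rho - rhohat \<noteq> 0"
    using rho_pos rhohat_neg by simp
  ultimately show "\<mu> = 0 \<and> q = 1 / \<kappa>"
    using kappa_pos by (simp add: field_simps)
next
  assume "\<mu> = 0 \<and> q = 1 / \<kappa>"
  then have "disc = \<theta>\<^sup>2 + \<sigma>\<^sup>2 / \<kappa>"
    unfolding dNIG_def using kappa_pos by (simp add: field_simps)
  moreover have "0 \<le> \<theta>\<^sup>2 + \<sigma>\<^sup>2 / \<kappa>"
    using kappa_pos by simp
  ultimately show "zeta = of_real rho \<and> zetahat = of_real rhohat"
    using \<open>\<mu> = 0 \<and> q = 1 / \<kappa>\<close>
    unfolding zetaNIG_def zetahatNIG_def rhoNIG_def rhohatNIG_def by (simp add: csqrt_of_real)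
qed

lemma psi_has_field_derivative:
  assumes "p z \<notin> \<real>\<^sub>\<le>\<^sub>0"
  shows "(psi has_field_derivative (of_real \<theta> + of_real (\<sigma>\<^sup>2) * z) / csqrt (p z) + of_real \<mu>) (at z)"
proof -
  have psi_eq: "psi = (\<lambda>z. 1 / of_real \<kappa> - 1 / of_real \<kappa> * csqrt (p z) + of_real \<mu> * z)"
    unfolding psiX_def p_def by simp
  have "(p has_field_derivative - 2 * of_real \<kappa> * (of_real \<theta> + of_real (\<sigma>\<^sup>2) * z)) (at z)"
    unfolding p_def [abs_def] by (auto intro!: derivative_eq_intros simp: algebra_simps power2_eq_square)
  then have deriv: "(psi has_field_derivative - 1 / of_real \<kappa> * (- 2 * of_real \<kappa>
      * (of_real \<theta> + of_real (\<sigma>\<^sup>2) * z) / (2 * csqrt (p z))) + of_real \<mu>) (at z)"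
    unfolding psi_eq using assms by (auto intro!: derivative_eq_intros)
  have "csqrt (p z) \<noteq> 0"
    using assms by auto
  then have "- 1 / of_real \<kappa> * (- 2 * of_real \<kappa> * (of_real \<theta> + of_real (\<sigma>\<^sup>2) * z)
      / (2 * csqrt (p z))) = (of_real \<theta> + of_real (\<sigma>\<^sup>2) * z) / csqrt (p z)"
    using kappa_pos by (simp add: field_simps)
  then show ?thesis
    using deriv by (simp only:)
qed

lemma solution_simple_zero:
  assumes sol: "psi z0 = of_real q" and "z0 \<in> \<real>" and "rhohat < Re z0" and "Re z0 < rho"
  shows "(\<lambda>z. of_real q - psi z) analytic_on {z0} \<and> deriv (\<lambda>z. of_real q - psi z) z0 \<noteq> 0"
proof
  define x where "x = Re z0"
  have z0: "z0 = of_real x"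
    unfolding x_def using \<open>z0 \<in> \<real>\<close> by (simp add: complex_is_Real_iff complex_eq_iff)
  have "0 < p x"
    unfolding x_def p_pos_iff using assms by simp
  then have p_z0: "p z0 \<notin> \<real>\<^sub>\<le>\<^sub>0"
    unfolding z0 p_of_real by (simp add: complex_nonpos_Reals_iff)
  show "(\<lambda>z. of_real q - psi z) analytic_on {z0}"
    using p_z0 kappa_pos unfolding psiX_def p_def by (auto intro!: analytic_intros)
  have sol_x: "psi (of_real x) = of_real q"
    using sol unfolding z0 .
  then have "(w x)\<^sup>2 = p x" and "0 \<le> w x"
    unfolding psi_of_real_eq_iff by auto
  then have "w x \<noteq> 0" and "zeta_den * x - zeta_mid \<noteq> 0"
    using \<open>0 < p x\<close> mult_zeta_dist_pos real_solution_nonzero[OF sol_x] by fastforce+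
  have "csqrt (p z0) = of_real (w x)"
    using sol unfolding psi_eq_iff_csqrt z0 w_of_real .
  then have "((\<lambda>z. of_real q - psi z) has_field_derivative
      - of_real ((\<theta> + \<sigma>\<^sup>2 * x) / w x + \<mu>)) (at z0)"
    using psi_has_field_derivative[OF p_z0] unfolding z0 by (auto intro!: derivative_eq_intros)
  then have "deriv (\<lambda>z. of_real q - psi z) z0 = - of_real ((\<theta> + \<sigma>\<^sup>2 * x) / w x + \<mu>)"
    by (rule DERIV_imp_deriv)
  moreover have "(\<theta> + \<sigma>\<^sup>2 * x) / w x + \<mu> = (zeta_den * x - zeta_mid) / w x"
    unfolding zeta_dist_eq_w using \<open>w x \<noteq> 0\<close> by (simp add: field_simps)
  moreover have "(zeta_den * x - zeta_mid) / w x \<noteq> 0"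
    using \<open>w x \<noteq> 0\<close> \<open>zeta_den * x - zeta_mid \<noteq> 0\<close> by simp
  ultimately show "deriv (\<lambda>z. of_real q - psi z) z0 \<noteq> 0"
    by (simp only: neg_equal_0_iff_equal of_real_eq_0_iff not_False_eq_True)
qed

end

theorem proposition2p1:
  fixes q \<kappa> \<sigma> \<mu> \<theta> :: real
  assumes "q > 0" and "\<kappa> > 0" and "\<sigma> > 0"
  defines "\<psi> \<equiv> psiX \<theta> \<sigma> \<kappa> \<mu>"
    and "\<rho> \<equiv> rhoNIG \<theta> \<sigma> \<kappa>"
    and "\<rho>h \<equiv> rhohatNIG \<theta> \<sigma> \<kappa>"
    and "d \<equiv> dNIG q \<theta> \<sigma> \<kappa> \<mu>"
    and "\<zeta> \<equiv> zetaNIG q \<theta> \<sigma> \<kappa> \<mu>"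
    and "\<zeta>h \<equiv> zetahatNIG q \<theta> \<sigma> \<kappa> \<mu>"
  shows
    \<comment> \<open>(i)\<close>
    "(finite {z. \<psi> z = of_real q} \<and> card {z. \<psi> z = of_real q} \<le> 2)
    \<comment> \<open>(ii)\<close>
     \<and> (\<forall>z0. \<psi> z0 = of_real q \<longleftrightarrow>
        (\<exists>x. z0 = complex_of_real x \<and> x \<in> {\<rho>h..<0} \<union> {0<..\<rho>}
             \<and> (z0 = \<zeta> \<or> z0 = \<zeta>h) \<and> d > 0 \<and> q - 1 / \<kappa> \<le> \<mu> * x))
     \<and> ((\<psi> \<zeta> = of_real q \<or> \<psi> \<zeta>h = of_real q) \<longrightarrow> \<zeta> \<noteq> \<zeta>h)
    \<comment> \<open>(iii)\<close>
     \<and> (\<psi> \<zeta> = of_real q \<longrightarrow> \<zeta> \<in> \<real> \<and> Re \<zeta> > 0)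
     \<and> (\<psi> \<zeta>h = of_real q \<longrightarrow> \<zeta>h \<in> \<real> \<and> Re \<zeta>h < 0)
     \<and> (\<psi> \<zeta> = of_real q \<and> \<psi> \<zeta>h = of_real q \<longrightarrow>
        \<zeta> \<in> \<real> \<and> \<zeta>h \<in> \<real> \<and> \<rho>h \<le> Re \<zeta>h \<and> Re \<zeta>h < 0 \<and> 0 < Re \<zeta> \<and> Re \<zeta> \<le> \<rho>)
    \<comment> \<open>(iv)\<close>
     \<and> (\<forall>z0. \<psi> z0 = of_real q \<and> z0 \<in> \<real> \<and> \<rho>h < Re z0 \<and> Re z0 < \<rho> \<longrightarrow>
        (\<lambda>z. of_real q - \<psi> z) analytic_on {z0} \<and> deriv (\<lambda>z. of_real q - \<psi> z) z0 \<noteq> 0)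
    \<comment> \<open>(v)\<close>
     \<and> (\<zeta> \<in> \<real> \<longrightarrow> \<rho>h \<le> Re \<zeta> \<and> Re \<zeta> \<le> \<rho>)
     \<and> (\<zeta>h \<in> \<real> \<longrightarrow> \<rho>h \<le> Re \<zeta>h \<and> Re \<zeta>h \<le> \<rho>)
    \<comment> \<open>(vi)\<close>
     \<and> (complex_of_real \<rho> \<noteq> \<zeta>h \<and> complex_of_real \<rho>h \<noteq> \<zeta>)
    \<comment> \<open>(vii)\<close>
     \<and> ((\<zeta> = complex_of_real \<rho> \<and> \<zeta>h = complex_of_real \<rho>h) \<longleftrightarrow> (\<mu> = 0 \<and> q = 1 / \<kappa>))"
proof -
  interpret nig_params q \<kappa> \<sigma> \<mu> \<theta>
    using assms(1-3) by unfold_locales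
  show ?thesis
    unfolding \<psi>_def \<rho>_def \<rho>h_def d_def \<zeta>_def \<zeta>h_def
    using finite_solutions card_solutions_le_2 psi_eq_iff zeta_neq_zetahat
      zeta_solution_pos zetahat_solution_neg solution_simple_zero zeta_real_bounds zetahat_real_bounds
      rho_neq_zetahat rhohat_neq_zeta zetas_eq_rhos_iff
    by blast
qed

end
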